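(* Let $\Sigma$ be an alphabet with at least three letters. If $f$ and $g$ are unary congruence preserving functions $\mathcal{T}(\Sigma)\to\mathcal{T}(\Sigma)$ such that $f(a)=g(a)$ for all $a\in\Sigma$, then for all $t\in\mathcal{T}(\Sigma)$, $f(t)$ and $g(t)$ are similar.
   Context: Let $\Sigma$ be an alphabet not containing $0,1$. A binary tree over $\Sigma$ is a finite set $t \subseteq \{0,1\}^*\Sigma$ such that for any $ua, vb \in t$ with $ua \neq vb$, $u$ is not a prefix of $v$ and $v$ is not a prefix of $u$; $\mathcal{T}(\Sigma)$ is the set of such trees, $\mathbf 0=\emptyset$, each letter $a$ is identified with $\{a\}$, and $t\star t' = 0.t\cup 1.t'$. A congruence is an equivalence relation on $\mathcal{T}(\Sigma)$ compatible with $\star$. A function $f\colon\mathcal{T}(\Sigma)\to\mathcal{T}(\Sigma)$ is congruence preserving if for every congruence $\sim$, $t\sim t'$ implies $f(t)\sim f(t')$. Every map $\Sigma\to\mathcal{T}(\Sigma)$ extends uniquely to an endomorphism of $\langle\mathcal{T}(\Sigma),\star\rangle$. For $a\in\Sigma$, $\nu_a$ is the endomorphism sending every letter to $a$; $t,t'$ are similar if $\nu_a(t)=\nu_a(t')$ for some (equivalently every) $a\in\Sigma$. *)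

theory Defs
  imports Main "HOL-Library.Sublist"
begin

text \<open>A word in {0,1}^* Sigma is a pair
  (u, a) with u a list of booleans (False = 0, True = 1) and a a letter.\<close>

definition is_btree :: "(bool list \<times> 'a) set \<Rightarrow> bool" where
  "is_btree t \<longleftrightarrow> finite t \<and>
     (\<forall>u a v b. (u, a) \<in> t \<longrightarrow> (v, b) \<in> t \<longrightarrow> (u, a) \<noteq> (v, b) \<longrightarrow>
        \<not> prefix u v \<and> \<not> prefix v u)"

typedef 'a btree = "{t :: (bool list \<times> 'a) set. is_btree t}"
  by (rule exI[of _ "{}"]) (simp add: is_btree_def)

definition bt_zero :: "'a btree" where
  "bt_zero = Abs_btree {}"

definition bt_letter :: "'a \<Rightarrow> 'a btree" where
  "bt_letter a = Abs_btree {([], a)}"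

definition bt_star :: "'a btree \<Rightarrow> 'a btree \<Rightarrow> 'a btree" where
  "bt_star t t' = Abs_btree ((\<lambda>(u, a). (False # u, a)) ` Rep_btree t \<union>
                             (\<lambda>(u, a). (True # u, a)) ` Rep_btree t')"

definition congruence :: "('a btree \<Rightarrow> 'a btree \<Rightarrow> bool) \<Rightarrow> bool" where
  "congruence R \<longleftrightarrow> equivp R \<and>
     (\<forall>t1 t1' t2 t2'. R t1 t1' \<longrightarrow> R t2 t2' \<longrightarrow> R (bt_star t1 t2) (bt_star t1' t2'))"

definition congruence_preserving :: "('a btree \<Rightarrow> 'a btree) \<Rightarrow> bool" where
  "congruence_preserving f \<longleftrightarrow>
     (\<forall>R. congruence R \<longrightarrow> (\<forall>t t'. R t t' \<longrightarrow> R (f t) (f t')))"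

definition nu :: "'a \<Rightarrow> 'a btree \<Rightarrow> 'a btree" where
  "nu a t = Abs_btree ((\<lambda>(u, b). (u, a)) ` Rep_btree t)"

definition similar :: "'a btree \<Rightarrow> 'a btree \<Rightarrow> bool" where
  "similar t t' \<longleftrightarrow> (\<exists>a. nu a t = nu a t')"

end

theory Submission
  imports Defs
begin

text \<open>Fix distinct letters \<open>a\<close>, \<open>b\<close>, \<open>x\<close> and put \<open>s = \<nu>\<^sub>x(t)\<close>. The kernel of \<open>\<nu>\<^sub>x\<close> is a
  congruence identifying \<open>t\<close> with \<open>s\<close>, so \<open>f(t)\<close> is similar to \<open>f(s)\<close> and \<open>g(t)\<close> to \<open>g(s)\<close>.
  For a letter \<open>c \<noteq> x\<close>, grafting \<open>s\<close> at every \<open>c\<close>-leaf is an endomorphism mapping both \<open>c\<close> and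
  \<open>s\<close> to \<open>s\<close>; its kernel is a congruence, so \<open>f(c) = g(c)\<close> forces \<open>f(s)\<close> and \<open>g(s)\<close> to agree
  after grafting at \<open>c\<close>. Grafting at two different letters \<open>a\<close>, \<open>b\<close> is jointly injective on
  prefix-free sets, hence \<open>f(s) = g(s)\<close>.\<close>

type_synonym 'a leaves = "(bool list \<times> 'a) set"

definition shift :: "bool \<Rightarrow> 'a leaves \<Rightarrow> 'a leaves" where
  "shift d A = (\<lambda>(u, a). (d # u, a)) ` A"

definition relabel :: "'a \<Rightarrow> 'a leaves \<Rightarrow> 'a leaves" where
  "relabel x A = (\<lambda>(u, _). (u, x)) ` A"

definition graft :: "'a \<Rightarrow> 'a leaves \<Rightarrow> 'a leaves \<Rightarrow> 'a leaves" where
  "graft c T A = {p \<in> A. snd p \<noteq> c} \<union> {(w @ w', y) | w w' y. (w, c) \<in> A \<and> (w', y) \<in> T}"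

text \<open>Endomorphisms are handled as maps on raw leaf sets: the kernel of such a map on trees is a
  congruence without any need to show that the map preserves prefix-freeness.\<close>

definition preserves_star :: "('a leaves \<Rightarrow> 'a leaves) \<Rightarrow> bool" where
  "preserves_star \<phi> \<longleftrightarrow>
     (\<forall>A B. \<phi> (shift False A \<union> shift True B) = shift False (\<phi> A) \<union> shift True (\<phi> B))"

lemma is_btree_Rep_btree: "is_btree (Rep_btree t)"
  using Rep_btree by simp

lemma is_btree_shift_Un:
  assumes "is_btree A" "is_btree B"
  shows "is_btree (shift False A \<union> shift True B)"
  using assms unfolding is_btree_def shift_def
  by (intro conjI, simp, intro allI impI, elim UnE imageE, auto split: prod.splits)

lemma Rep_bt_star: "Rep_btree (bt_star s t) = shift False (Rep_btree s) \<union> shift True (Rep_btree t)"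
  unfolding bt_star_def shift_def[symmetric]
  by (rule Abs_btree_inverse) (simp add: is_btree_shift_Un is_btree_Rep_btree)

lemma Rep_bt_letter: "Rep_btree (bt_letter c) = {([], c)}"
  unfolding bt_letter_def by (rule Abs_btree_inverse) (simp add: is_btree_def)

lemma is_btree_relabel: "is_btree A \<Longrightarrow> is_btree (relabel x A)"
  unfolding is_btree_def relabel_def by fastforce

lemma Rep_nu: "Rep_btree (nu x t) = relabel x (Rep_btree t)"
  unfolding nu_def relabel_def[symmetric]
  by (rule Abs_btree_inverse) (simp add: is_btree_relabel is_btree_Rep_btree)

lemma relabel_relabel [simp]: "relabel x (relabel y A) = relabel x A"
  unfolding relabel_def by (auto simp: image_iff)

lemma labels_relabel: "snd ` relabel x A \<subseteq> {x}"
  unfolding relabel_def by auto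

lemma preserves_star_relabel: "preserves_star (relabel x)"
  unfolding preserves_star_def relabel_def shift_def by (auto simp: image_iff)

lemma mem_shift: "(w, y) \<in> shift d A \<longleftrightarrow> (\<exists>u. w = d # u \<and> (u, y) \<in> A)"
  unfolding shift_def by auto

lemma mem_graft:
  "(w, y) \<in> graft c T A \<longleftrightarrow>
     (w, y) \<in> A \<and> y \<noteq> c \<or> (\<exists>w0 w'. w = w0 @ w' \<and> (w0, c) \<in> A \<and> (w', y) \<in> T)"
  unfolding graft_def by auto

lemma graft_shift: "graft c T (shift d A) = shift d (graft c T A)"
proof (rule set_eqI)
  fix p :: "bool list \<times> 'a"
  show "p \<in> graft c T (shift d A) \<longleftrightarrow> p \<in> shift d (graft c T A)"
    by (cases p) (auto simp: mem_shift mem_graft; metis append_Cons)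
qed

lemma preserves_star_graft: "preserves_star (graft c T)"
proof -
  have "graft c T (A \<union> B) = graft c T A \<union> graft c T B" for A B
    unfolding graft_def by auto
  then show ?thesis
    unfolding preserves_star_def by (simp add: graft_shift)
qed

lemma graft_letter: "graft c T {([], c)} = T"
  unfolding graft_def by auto

lemma graft_absent: "c \<notin> snd ` A \<Longrightarrow> graft c T A = A"
  unfolding graft_def by force

lemma congruence_kernel:
  assumes "preserves_star \<phi>"
  shows "congruence (\<lambda>s t. \<phi> (Rep_btree s) = \<phi> (Rep_btree t))"
  unfolding congruence_def
proof (intro conjI allI impI)
  show "equivp (\<lambda>s t. \<phi> (Rep_btree s) = \<phi> (Rep_btree t))"
    by (intro equivpI reflpI sympI transpI) auto
next
  fix s s' t t'
  assume "\<phi> (Rep_btree s) = \<phi> (Rep_btree s')" "\<phi> (Rep_btree t) = \<phi> (Rep_btree t')"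
  then show "\<phi> (Rep_btree (bt_star s t)) = \<phi> (Rep_btree (bt_star s' t'))"
    using assms by (simp add: Rep_bt_star preserves_star_def)
qed

lemma congruence_preserving_kernel:
  assumes "congruence_preserving f" "preserves_star \<phi>"
    and "\<phi> (Rep_btree s) = \<phi> (Rep_btree t)"
  shows "\<phi> (Rep_btree (f s)) = \<phi> (Rep_btree (f t))"
  using assms congruence_kernel[of \<phi>] unfolding congruence_preserving_def by blast

lemma congruence_preserving_nu:
  assumes "congruence_preserving f"
  shows "nu x (f t) = nu x (f (nu x t))"
proof -
  have "relabel x (Rep_btree (f t)) = relabel x (Rep_btree (f (nu x t)))"
    using assms preserves_star_relabel by (rule congruence_preserving_kernel) (simp add: Rep_nu)
  then show ?thesis
    by (simp add: Rep_nu flip: Rep_btree_inject)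
qed

lemma graft_two_letters_subset:
  assumes "graft a T U = graft a T V" "graft b T U = graft b T V"
    and "a \<noteq> b" "a \<notin> snd ` T" "b \<notin> snd ` T" "is_btree V"
  shows "V \<subseteq> U"
proof (rule subrelI)
  fix w y assume "(w, y) \<in> V"
  show "(w, y) \<in> U"
  proof (cases "y \<in> snd ` T")
    case False
    obtain c where "c \<in> {a, b}" "c \<noteq> y"
      using \<open>a \<noteq> b\<close> by blast
    moreover have "graft c T V = graft c T U"
      using \<open>c \<in> {a, b}\<close> assms(1,2) by auto
    ultimately have "(w, y) \<in> graft c T U"
      using \<open>(w, y) \<in> V\<close> by (metis mem_graft)
    then show ?thesis
      using False by (force simp: mem_graft)
  next
    case True
    then have "y \<noteq> a"
      using assms(4) by force
    then have "(w, y) \<in> graft a T U"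
      using \<open>(w, y) \<in> V\<close> assms(1) by (simp add: mem_graft)
    then consider "(w, y) \<in> U" | w0 w' where "w = w0 @ w'" "(w0, a) \<in> U"
      by (auto simp: mem_graft)
    then show ?thesis
    proof cases
      case 2
      have "(w0, a) \<in> graft b T V"
        using \<open>(w0, a) \<in> U\<close> \<open>a \<noteq> b\<close> by (simp flip: assms(2) add: mem_graft)
      then have "(w0, a) \<in> V"
        using assms(4) by (force simp: mem_graft)
      moreover have "prefix w0 w"
        using \<open>w = w0 @ w'\<close> by simp
      ultimately show ?thesis
        using \<open>(w, y) \<in> V\<close> \<open>y \<noteq> a\<close> \<open>is_btree V\<close> unfolding is_btree_def by blast
    qed
  qed
qed

lemma graft_two_letters_inject:
  assumes "graft a T U = graft a T V" "graft b T U = graft b T V"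
    and "a \<noteq> b" "a \<notin> snd ` T" "b \<notin> snd ` T" "is_btree U" "is_btree V"
  shows "U = V"
  using graft_two_letters_subset[OF assms(1-5,7)]
    graft_two_letters_subset[OF assms(1-2)[symmetric] assms(3-6)]
  by blast

lemma congruence_preserving_graft:
  assumes "congruence_preserving f" "congruence_preserving g"
    and "f (bt_letter c) = g (bt_letter c)" "c \<notin> snd ` Rep_btree s"
  shows "graft c (Rep_btree s) (Rep_btree (f s)) = graft c (Rep_btree s) (Rep_btree (g s))"
proof -
  have letter_equiv:
    "graft c (Rep_btree s) (Rep_btree (bt_letter c)) = graft c (Rep_btree s) (Rep_btree s)"
    using assms(4) by (simp add: Rep_bt_letter graft_letter graft_absent)
  have "graft c (Rep_btree s) (Rep_btree (f s))
      = graft c (Rep_btree s) (Rep_btree (f (bt_letter c)))"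
    using congruence_preserving_kernel[OF assms(1) preserves_star_graft letter_equiv] by simp
  also have "\<dots> = graft c (Rep_btree s) (Rep_btree (g s))"
    using congruence_preserving_kernel[OF assms(2) preserves_star_graft letter_equiv] assms(3) by simp
  finally show ?thesis .
qed

lemma congruence_preserving_eq_avoiding_two_letters:
  assumes "congruence_preserving f" "congruence_preserving g"
    and "f (bt_letter a) = g (bt_letter a)" "f (bt_letter b) = g (bt_letter b)"
    and "a \<noteq> b" "a \<notin> snd ` Rep_btree s" "b \<notin> snd ` Rep_btree s"
  shows "f s = g s"
  using graft_two_letters_inject[OF congruence_preserving_graft[OF assms(1-3,6)]
      congruence_preserving_graft[OF assms(1,2,4,7)] assms(5-7) is_btree_Rep_btree is_btree_Rep_btree]
  by (simp add: Rep_btree_inject)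

theorem mainTheorem3:
  fixes f g :: "'a btree \<Rightarrow> 'a btree"
  assumes "finite (UNIV :: 'a set)"
    and "card (UNIV :: 'a set) \<ge> 3"
    and "congruence_preserving f"
    and "congruence_preserving g"
    and "\<forall>a. f (bt_letter a) = g (bt_letter a)"
  shows "\<forall>t. similar (f t) (g t)"
proof
  fix t
  obtain a b x :: 'a where "a \<noteq> b" "a \<noteq> x" "b \<noteq> x"
  proof -
    obtain S :: "'a set" where "card S = 3"
      using assms(2) obtain_subset_with_card_n by blast
    then show ?thesis
      using that by (auto simp: card_Suc_eq numeral_3_eq_3)
  qed
  have "snd ` Rep_btree (nu x t) \<subseteq> {x}"
    by (simp add: Rep_nu labels_relabel)
  then have "a \<notin> snd ` Rep_btree (nu x t)" "b \<notin> snd ` Rep_btree (nu x t)"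
    using \<open>a \<noteq> x\<close> \<open>b \<noteq> x\<close> by auto
  then have "f (nu x t) = g (nu x t)"
    using congruence_preserving_eq_avoiding_two_letters[OF assms(3,4)] assms(5) \<open>a \<noteq> b\<close> by blast
  have "nu x (f t) = nu x (f (nu x t))"
    by (rule congruence_preserving_nu[OF assms(3)])
  also have "\<dots> = nu x (g (nu x t))"
    using \<open>f (nu x t) = g (nu x t)\<close> by simp
  also have "\<dots> = nu x (g t)"
    by (rule congruence_preserving_nu[OF assms(4), symmetric])
  finally show "similar (f t) (g t)"
    unfolding similar_def by blast
qed

end
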